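(* For every positive integer $k$, $$\int_0^{\pi/2} x^2\cos^{2k-1}(x)\,dx = \frac14\,\frac{4^k H_k^{(2)}}{k\binom{2k}{k}}-\frac{4^k H_{2k}^{(2)}}{k\binom{2k}{k}}+\frac34\zeta(2)\,\frac{4^k}{k\binom{2k}{k}}.$$
   Context: For positive integers $n$, $H_n^{(2)}=\sum_{j=1}^n j^{-2}$ is the generalized harmonic number of order $2$; $\binom{2k}{k}$ is the central binomial coefficient and $\zeta$ is the Riemann zeta function. *)

theory Defs
  imports "HOL-Analysis.Analysis"
begin

definition harm2 :: "nat \<Rightarrow> real" where
  "harm2 n = (\<Sum>j=1..n. 1 / (real j)^2)"

definition zeta_real :: "real \<Rightarrow> real" where
  "zeta_real s = (\<Sum>n. 1 / (real (Suc n)) powr s)"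

end

theory Submission
  imports Defs
begin

(* Write I n and J n for the integrals of x^2 cos^n x and cos^n x over [0, pi/2].
   Differentiating cos^(n+1) x sin x and x^2 cos^(n+1) x sin x + 2/(n+2) x cos^(n+2) x,
   whose boundary values vanish, gives the reduction formulas
     (n+2) J (n+2) = (n+1) J n,   (n+2) I (n+2) = (n+1) I n - 2/(n+2) J (n+2).
   The coefficient c k = 4^k / (k (2k choose k)) satisfies (2k+1) c (k+1) = 2k c k, so induction
   on k gives J (2k-1) = c k / 2 and I (2k-1) = c k (H_k/4 - H_2k + pi^2/8), where
   H_n denotes the harmonic number of order 2; finally zeta 2 = pi^2/6. *)

definition cos_power_integral :: "nat \<Rightarrow> real" where
  "cos_power_integral n = integral {0..pi/2} (\<lambda>x. cos x ^ n)"

definition xsq_cos_power_integral :: "nat \<Rightarrow> real" where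
  "xsq_cos_power_integral n = integral {0..pi/2} (\<lambda>x. x^2 * cos x ^ n)"

lemma has_integral_cos_power_integral:
  "((\<lambda>x. cos x ^ n) has_integral cos_power_integral n) {0..pi/2}"
  unfolding cos_power_integral_def
  by (intro integrable_integral integrable_continuous_real continuous_intros)

lemma has_integral_xsq_cos_power_integral:
  "((\<lambda>x. x^2 * cos x ^ n) has_integral xsq_cos_power_integral n) {0..pi/2}"
  unfolding xsq_cos_power_integral_def
  by (intro integrable_integral integrable_continuous_real continuous_intros)

lemma has_integral_of_real_derivative:
  fixes a b :: real
  assumes "a \<le> b" and "\<And>x. (G has_real_derivative g x) (at x)"
  shows "(g has_integral (G b - G a)) {a..b}"
  using assms by (intro fundamental_theorem_of_calculus)
    (auto simp: has_real_derivative_iff_has_vector_derivative[symmetric]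
          intro: has_field_derivative_at_within)

lemma has_real_derivative_cos_power_sin:
  "((\<lambda>x. cos x ^ Suc n * sin x) has_real_derivative
     real (n+2) * cos x ^ (n+2) - real (n+1) * cos x ^ n) (at x)"
proof (rule DERIV_cong[OF DERIV_mult'[OF DERIV_power_Suc[OF DERIV_cos] DERIV_sin]])
  have "cos x ^ Suc n * cos x + (1 + real n) * (- sin x * cos x ^ n) * sin x
      = cos x ^ n * ((cos x)^2 - (1 + real n) * (sin x)^2)"
    by (simp add: algebra_simps power2_eq_square)
  also have "\<dots> = cos x ^ n * (real (n+2) * (cos x)^2 - real (n+1))"
    unfolding sin_squared_eq by (simp add: algebra_simps)
  also have "\<dots> = real (n+2) * cos x ^ (n+2) - real (n+1) * cos x ^ n"
    by (simp add: algebra_simps power_add power2_eq_square)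
  finally show "cos x ^ Suc n * cos x + (1 + real n) * (- sin x * cos x ^ n) * sin x
      = real (n+2) * cos x ^ (n+2) - real (n+1) * cos x ^ n" .
qed

lemma has_real_derivative_xsq_cos_power_sin:
  "((\<lambda>x. x^2 * (cos x ^ Suc n * sin x) + 2 / real (n+2) * (x * cos x ^ Suc (Suc n)))
     has_real_derivative
     real (n+2) * (x^2 * cos x ^ (n+2)) - real (n+1) * (x^2 * cos x ^ n)
       + 2 / real (n+2) * cos x ^ (n+2)) (at x)"
  by (rule DERIV_cong[OF DERIV_add[OF DERIV_mult'[OF DERIV_pow has_real_derivative_cos_power_sin]
        DERIV_cmult[OF DERIV_mult'[OF DERIV_ident DERIV_power_Suc[OF DERIV_cos]]]]])
    (simp add: field_simps power2_eq_square)

lemma cos_power_integral_recurrence: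
  "real (n+2) * cos_power_integral (n+2) = real (n+1) * cos_power_integral n"
proof -
  let ?G = "\<lambda>x. cos x ^ Suc n * sin x"
  have "((\<lambda>x. real (n+2) * cos x ^ (n+2) - real (n+1) * cos x ^ n)
      has_integral ?G (pi/2) - ?G 0) {0..pi/2}"
    by (intro has_integral_of_real_derivative has_real_derivative_cos_power_sin) simp
  moreover have "((\<lambda>x. real (n+2) * cos x ^ (n+2) - real (n+1) * cos x ^ n)
      has_integral real (n+2) * cos_power_integral (n+2) - real (n+1) * cos_power_integral n) {0..pi/2}"
    by (intro has_integral_diff has_integral_mult_right has_integral_cos_power_integral)
  ultimately show ?thesis
    by (auto dest: has_integral_unique)
qed

lemma xsq_cos_power_integral_recurrence:
  "real (n+2) * xsq_cos_power_integral (n+2)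
     = real (n+1) * xsq_cos_power_integral n - 2 / real (n+2) * cos_power_integral (n+2)"
proof -
  let ?G = "\<lambda>x. x^2 * (cos x ^ Suc n * sin x) + 2 / real (n+2) * (x * cos x ^ Suc (Suc n))"
  let ?g = "\<lambda>x. real (n+2) * (x^2 * cos x ^ (n+2)) - real (n+1) * (x^2 * cos x ^ n)
       + 2 / real (n+2) * cos x ^ (n+2)"
  have "(?g has_integral ?G (pi/2) - ?G 0) {0..pi/2}"
    by (intro has_integral_of_real_derivative has_real_derivative_xsq_cos_power_sin) simp
  moreover have "(?g has_integral real (n+2) * xsq_cos_power_integral (n+2)
      - real (n+1) * xsq_cos_power_integral n + 2 / real (n+2) * cos_power_integral (n+2)) {0..pi/2}"
    by (intro has_integral_add has_integral_diff has_integral_mult_right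
        has_integral_xsq_cos_power_integral has_integral_cos_power_integral)
  ultimately show ?thesis
    by (auto dest: has_integral_unique)
qed

lemma cos_power_integral_1: "cos_power_integral 1 = 1"
  using has_integral_of_real_derivative[OF _ DERIV_sin, of 0 "pi/2"]
  by (auto intro: has_integral_unique[OF has_integral_cos_power_integral])

lemma xsq_cos_power_integral_1: "xsq_cos_power_integral 1 = pi^2/4 - 2"
proof -
  let ?G = "\<lambda>x::real. x^2 * sin x + 2 * x * cos x - 2 * sin x"
  have "((\<lambda>x. x^2 * cos x) has_integral ?G (pi/2) - ?G 0) {0..pi/2}"
    by (rule has_integral_of_real_derivative) (auto intro!: derivative_eq_intros simp: algebra_simps)
  then show ?thesis
    using has_integral_xsq_cos_power_integral[of 1] by (auto simp: power_divide dest: has_integral_unique)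
qed

lemma central_binomial_Suc:
  "Suc k * (2 * Suc k choose Suc k) = 2 * (2*k+1) * (2*k choose k)"
proof -
  have "Suc k * (2 * Suc k choose Suc k) = Suc (Suc (2*k)) * (Suc (2*k) choose k)"
    using Suc_times_binomial[of k "Suc (2*k)"] by simp
  also have "Suc (2*k) choose k = Suc (2*k) choose Suc k"
    using binomial_symmetric[of k "Suc (2*k)"] by simp
  also have "Suc (Suc (2*k)) * (Suc (2*k) choose Suc k) = 2 * (Suc k * (Suc (2*k) choose Suc k))"
    by simp
  also have "Suc k * (Suc (2*k) choose Suc k) = Suc (2*k) * (2*k choose k)"
    by (rule Suc_times_binomial)
  finally show ?thesis
    by (simp only: Suc_eq_plus1 mult.assoc)
qed

definition wallis_coeff :: "nat \<Rightarrow> real" where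
  "wallis_coeff k = 4^k / (real k * real (2*k choose k))"

lemma wallis_coeff_1: "wallis_coeff 1 = 2"
  by (simp add: wallis_coeff_def)

lemma wallis_coeff_Suc:
  assumes "k \<ge> 1"
  shows "real (2*k+1) * wallis_coeff (Suc k) = real (2*k) * wallis_coeff k"
proof -
  define C where "C = real (2*k choose k)"
  define p where "p = real (2*k+1)"
  have pos: "C > 0" "p > 0" "real k > 0"
    using assms by (simp_all add: C_def p_def)
  have binom: "real (Suc k) * real (2 * Suc k choose Suc k) = 2 * p * C"
    unfolding C_def p_def by (metis central_binomial_Suc of_nat_mult of_nat_numeral)
  have "p * wallis_coeff (Suc k) = 2 * 4^k / C"
    unfolding wallis_coeff_def binom using pos by (simp add: field_simps)
  also have "\<dots> = real (2*k) * wallis_coeff k"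
    using pos by (simp add: wallis_coeff_def C_def field_simps)
  finally show ?thesis
    by (simp add: p_def)
qed

lemma cos_power_integral_odd:
  assumes "k \<ge> 1"
  shows "cos_power_integral (2*k-1) = wallis_coeff k / 2"
  using assms
proof (induction k rule: nat_induct_at_least)
  case base
  show ?case
    using cos_power_integral_1 wallis_coeff_1 by simp
next
  case (Suc k)
  have "real (2*k+1) * cos_power_integral (2*k+1) = real (2*k) * cos_power_integral (2*k-1)"
    using cos_power_integral_recurrence[of "2*k-1"] Suc.hyps by (simp add: algebra_simps)
  also have "\<dots> = real (2*k+1) * (wallis_coeff (Suc k) / 2)"
    using Suc.IH wallis_coeff_Suc[OF Suc.hyps] by simp
  finally show ?case by simp
qed

lemma harm2_Suc: "harm2 (Suc n) = harm2 n + 1 / real (Suc n)^2"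
  by (simp add: harm2_def)

lemma harm2_quarter_minus_double_Suc:
  "harm2 (Suc k) / 4 - harm2 (2 * Suc k) = harm2 k / 4 - harm2 (2*k) - 1 / real (2*k+1)^2"
proof -
  define q where "q = real (Suc k)"
  have "harm2 (2 * Suc k) = harm2 (2*k) + 1 / real (2*k+1)^2 + 1 / (2*q)^2"
    by (simp add: harm2_Suc q_def power2_eq_square algebra_simps)
  moreover have "harm2 (Suc k) / 4 = harm2 k / 4 + 1 / (2*q)^2"
    unfolding harm2_Suc q_def[symmetric] by (simp add: power_mult_distrib add_divide_distrib)
  ultimately show ?thesis
    by linarith
qed

lemma xsq_cos_power_integral_odd:
  assumes "k \<ge> 1"
  shows "xsq_cos_power_integral (2*k-1)
           = wallis_coeff k * (harm2 k / 4 - harm2 (2*k) + pi^2/8)"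
  using assms
proof (induction k rule: nat_induct_at_least)
  case base
  have "harm2 1 = 1" "harm2 2 = 5/4"
    by (simp_all add: harm2_def numeral_2_eq_2)
  then show ?case
    using xsq_cos_power_integral_1 wallis_coeff_1 by simp
next
  case (Suc k)
  define A where "A m = harm2 m / 4 - harm2 (2*m) + pi^2/8" for m
  define w where "w = wallis_coeff (Suc k)"
  have pos: "real (2*k+1) > 0" by simp
  have "real (2*k+1) * xsq_cos_power_integral (2*k+1)
      = real (2*k) * xsq_cos_power_integral (2*k-1) - 2 / real (2*k+1) * cos_power_integral (2*k+1)"
    using xsq_cos_power_integral_recurrence[of "2*k-1"] Suc.hyps by (simp add: algebra_simps)
  also have "\<dots> = real (2*k) * wallis_coeff k * A k - w / real (2*k+1)"
    using Suc.IH cos_power_integral_odd[of "Suc k"] by (simp add: A_def w_def)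
  also have "\<dots> = real (2*k+1) * w * A k - w / real (2*k+1)"
    using wallis_coeff_Suc[OF Suc.hyps] by (simp add: w_def)
  also have "\<dots> = real (2*k+1) * w * (A k - 1 / real (2*k+1)^2)"
    using pos by (simp add: right_diff_distrib power2_eq_square)
  also have "A k - 1 / real (2*k+1)^2 = A (Suc k)"
    using harm2_quarter_minus_double_Suc[of k] unfolding A_def by linarith
  finally show ?case
    using pos by (simp add: A_def w_def)
qed

lemma zeta_real_2: "zeta_real 2 = pi^2/6"
proof -
  have "(\<lambda>n. 1 / real (Suc n) powr 2) = (\<lambda>n. 1 / (real n + 1)^2)"
    by (simp add: powr_numeral add.commute)
  then show ?thesis
    unfolding zeta_real_def using sums_unique[OF inverse_squares_sums] by simp
qed

theorem lemma4:
  fixes k :: nat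
  assumes "k \<ge> 1"
  shows "integral {0..pi/2} (\<lambda>x. x^2 * (cos x)^(2*k-1)) =
    (1/4) * (4^k * harm2 k / (real k * real (2*k choose k)))
    - 4^k * harm2 (2*k) / (real k * real (2*k choose k))
    + (3/4) * zeta_real 2 * (4^k / (real k * real (2*k choose k)))"
proof -
  have "integral {0..pi/2} (\<lambda>x. x^2 * (cos x)^(2*k-1))
      = wallis_coeff k * (harm2 k / 4 - harm2 (2*k) + 3/4 * zeta_real 2)"
    using xsq_cos_power_integral_odd[OF assms]
    by (simp add: xsq_cos_power_integral_def zeta_real_2)
  then show ?thesis
    using assms by (simp add: wallis_coeff_def field_simps)
qed

end
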